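(* Let $\Gamma\curvearrowright X$ be an extreme boundary action, and let $U,V\subseteq X$ be non-empty open sets neither of which is dense in $X$. Then the normal closures of $\Gamma_U$ and $\Gamma_V$ in $\Gamma$ coincide and are equal to $\operatorname{int}(\Gamma\curvearrowright X)$. Moreover, $\Gamma_U$ is amenable if and only if $\Gamma_V$ is amenable, and $\Gamma_U$ is trivial if and only if $\Gamma_V$ is trivial.
   Context: An action of a discrete group $\Gamma$ by homeomorphisms on a compact Hausdorff space $X$ with more than two points is an extreme boundary action if for every closed $K\subsetneq X$ and every non-empty open $U\subseteq X$ there is $g\in\Gamma$ with $gK\subseteq U$. $\Gamma_U=\{g\in\Gamma: gx=x\ \forall x\in U\}$; $\Gamma_x^\circ$ is the subgroup of elements fixing pointwise a neighbourhood of $x$; $\operatorname{int}(\Gamma\curvearrowright X)=\langle\Gamma_x^\circ: x\in X\rangle$. *)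

theory Defs
  imports "HOL-Analysis.Analysis" "HOL-Algebra.Group" "HOL-Algebra.Generated_Groups"
begin

text \<open>An action of the (discrete) group G on the space 'x by homeomorphisms.
  Each phi g is continuous, and the action axioms make phi (inv g) its inverse.\<close>
definition homeo_action :: "('g, 'b) monoid_scheme \<Rightarrow> ('g \<Rightarrow> 'x::topological_space \<Rightarrow> 'x) \<Rightarrow> bool" where
  "homeo_action G phi \<longleftrightarrow> group G \<and> phi \<one>\<^bsub>G\<^esub> = id
     \<and> (\<forall>g\<in>carrier G. \<forall>h\<in>carrier G. phi (g \<otimes>\<^bsub>G\<^esub> h) = phi g \<circ> phi h)
     \<and> (\<forall>g\<in>carrier G. continuous_on UNIV (phi g))"

definition extreme_boundary_action :: "('g, 'b) monoid_scheme \<Rightarrow> ('g \<Rightarrow> 'x::topological_space \<Rightarrow> 'x) \<Rightarrow> bool" where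
  "extreme_boundary_action G phi \<longleftrightarrow>
     (\<forall>K U. closed K \<and> K \<noteq> UNIV \<and> open U \<and> U \<noteq> {} \<longrightarrow> (\<exists>g\<in>carrier G. phi g ` K \<subseteq> U))"

definition rigid_stab :: "('g, 'b) monoid_scheme \<Rightarrow> ('g \<Rightarrow> 'x \<Rightarrow> 'x) \<Rightarrow> 'x set \<Rightarrow> 'g set" where
  "rigid_stab G phi U = {g \<in> carrier G. \<forall>x\<in>U. phi g x = x}"

definition germ_stab :: "('g, 'b) monoid_scheme \<Rightarrow> ('g \<Rightarrow> 'x::topological_space \<Rightarrow> 'x) \<Rightarrow> 'x \<Rightarrow> 'g set" where
  "germ_stab G phi x = {g \<in> carrier G. \<exists>W. open W \<and> x \<in> W \<and> (\<forall>y\<in>W. phi g y = y)}"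

definition int_action :: "('g, 'b) monoid_scheme \<Rightarrow> ('g \<Rightarrow> 'x::topological_space \<Rightarrow> 'x) \<Rightarrow> 'g set" where
  "int_action G phi = generate G (\<Union>x. germ_stab G phi x)"

definition normal_closure :: "('g, 'b) monoid_scheme \<Rightarrow> 'g set \<Rightarrow> 'g set" where
  "normal_closure G H = generate G {g \<otimes>\<^bsub>G\<^esub> h \<otimes>\<^bsub>G\<^esub> inv\<^bsub>G\<^esub> g | g h. g \<in> carrier G \<and> h \<in> H}"

definition amenable :: "('g, 'b) monoid_scheme \<Rightarrow> bool" where
  "amenable G \<longleftrightarrow> (\<exists>\<mu> :: 'g set \<Rightarrow> real.
      (\<forall>A. A \<subseteq> carrier G \<longrightarrow> \<mu> A \<ge> 0)
    \<and> \<mu> (carrier G) = 1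
    \<and> (\<forall>A B. A \<subseteq> carrier G \<longrightarrow> B \<subseteq> carrier G \<longrightarrow> A \<inter> B = {} \<longrightarrow> \<mu> (A \<union> B) = \<mu> A + \<mu> B)
    \<and> (\<forall>g\<in>carrier G. \<forall>A. A \<subseteq> carrier G \<longrightarrow> \<mu> ((\<lambda>a. g \<otimes>\<^bsub>G\<^esub> a) ` A) = \<mu> A))"

end

theory Submission
  imports Defs
begin

text \<open>
  For a non-empty open set W and a set U with non-dense closure, the boundary property applied
  to the closed set X - W and the open set X - closure U yields g with U \<subseteq> g W, hence
  g \<Gamma>(W) g\<inverse> \<subseteq> \<Gamma>(U). So \<Gamma>(U) and \<Gamma>(V) are conjugate into each
  other, which transfers triviality and, since amenability passes to subgroups and along
  isomorphisms, amenability. Moreover, every element of a germ stabiliser lies in some \<Gamma>(W)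
  and is therefore conjugate into \<Gamma>(U), while every conjugate of an element of \<Gamma>(U)
  fixes a non-empty open set pointwise; so the conjugates of \<Gamma>(U) are exactly the elements
  of the germ stabilisers, and the normal closure of \<Gamma>(U) is the group they generate.
\<close>

subsection \<open>Amenability of subgroups and isomorphic copies\<close>

lemma amenableI:
  fixes M :: "('a, 'c) monoid_scheme" and \<mu> :: "'a set \<Rightarrow> real"
  assumes "\<And>A. A \<subseteq> carrier M \<Longrightarrow> \<mu> A \<ge> 0" and "\<mu> (carrier M) = 1"
    and "\<And>A B. A \<subseteq> carrier M \<Longrightarrow> B \<subseteq> carrier M \<Longrightarrow> A \<inter> B = {} \<Longrightarrow> \<mu> (A \<union> B) = \<mu> A + \<mu> B"
    and "\<And>g A. g \<in> carrier M \<Longrightarrow> A \<subseteq> carrier M \<Longrightarrow> \<mu> ((\<lambda>a. g \<otimes>\<^bsub>M\<^esub> a) ` A) = \<mu> A"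
  shows "amenable M"
  unfolding amenable_def by (rule exI[of _ \<mu>]) (use assms in blast)

lemma amenable_bij_hom_transfer:
  fixes M :: "('a, 'c) monoid_scheme" and N :: "('b, 'd) monoid_scheme"
  assumes amenable: "amenable N"
    and bij: "bij_betw f (carrier M) (carrier N)"
    and hom: "\<And>a b. a \<in> carrier M \<Longrightarrow> b \<in> carrier M \<Longrightarrow> f (a \<otimes>\<^bsub>M\<^esub> b) = f a \<otimes>\<^bsub>N\<^esub> f b"
  shows "amenable M"
proof -
  obtain \<mu> :: "'b set \<Rightarrow> real" where
    nonneg: "\<forall>A. A \<subseteq> carrier N \<longrightarrow> \<mu> A \<ge> 0" and total: "\<mu> (carrier N) = 1"
    and additive: "\<forall>A B. A \<subseteq> carrier N \<longrightarrow> B \<subseteq> carrier N \<longrightarrow> A \<inter> B = {} \<longrightarrow> \<mu> (A \<union> B) = \<mu> A + \<mu> B"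
    and invariant: "\<forall>g\<in>carrier N. \<forall>A. A \<subseteq> carrier N \<longrightarrow> \<mu> ((\<lambda>a. g \<otimes>\<^bsub>N\<^esub> a) ` A) = \<mu> A"
    using amenable unfolding amenable_def by auto
  have inj: "inj_on f (carrier M)" and onto: "f ` carrier M = carrier N"
    using bij by (auto simp: bij_betw_def)
  have image_sub: "f ` A \<subseteq> carrier N" if "A \<subseteq> carrier M" for A
    using that onto by blast
  show ?thesis
  proof (rule amenableI[where \<mu> = "\<lambda>A. \<mu> (f ` A)"])
    show "\<mu> (f ` A) \<ge> 0" if "A \<subseteq> carrier M" for A
      using nonneg image_sub that by blast
    show "\<mu> (f ` carrier M) = 1"
      using total onto by simp
    show "\<mu> (f ` (A \<union> B)) = \<mu> (f ` A) + \<mu> (f ` B)"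
      if "A \<subseteq> carrier M" "B \<subseteq> carrier M" "A \<inter> B = {}" for A B
    proof -
      have "f ` A \<inter> f ` B = {}"
        using that inj_on_image_Int[OF inj, of A B] by simp
      then show ?thesis using additive image_sub that by (simp add: image_Un)
    qed
    show "\<mu> (f ` (\<lambda>a. g \<otimes>\<^bsub>M\<^esub> a) ` A) = \<mu> (f ` A)"
      if "g \<in> carrier M" "A \<subseteq> carrier M" for g A
    proof -
      have "f ` (\<lambda>a. g \<otimes>\<^bsub>M\<^esub> a) ` A = (\<lambda>b. f g \<otimes>\<^bsub>N\<^esub> b) ` f ` A"
        unfolding image_image using that by (auto intro!: image_cong hom)
      moreover have "f g \<in> carrier N" using that onto by blast
      ultimately show ?thesis using invariant image_sub that(2) by simp
    qed
  qed
qed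

lemma (in group) equivariant_retraction_onto_subgroup:
  assumes P: "subgroup P G"
  obtains q where "\<And>k. k \<in> carrier G \<Longrightarrow> q k \<in> P"
    and "\<And>p k. p \<in> P \<Longrightarrow> k \<in> carrier G \<Longrightarrow> q (p \<otimes> k) = p \<otimes> q k"
proof
  define rep where "rep k = (SOME t. t \<in> P #> k)" for k
  have rep: "rep k \<in> P #> k" if "k \<in> carrier G" for k
    unfolding rep_def using rcos_self[OF that P] by (rule someI)
  have rep_carrier: "rep k \<in> carrier G" if "k \<in> carrier G" for k
    using subgroup.elemrcos_carrier[OF P is_group that rep[OF that]] .
  show "k \<otimes> inv (rep k) \<in> P" if k: "k \<in> carrier G" for k
  proof -
    have "rep k \<otimes> inv k \<in> P"
      using subgroup.rcos_module_imp[OF P is_group k rep[OF k]] .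
    then have "inv (rep k \<otimes> inv k) \<in> P"
      using subgroup.m_inv_closed[OF P] by blast
    then show ?thesis using k rep_carrier[OF k] by (simp add: inv_mult_group)
  qed
  show "p \<otimes> k \<otimes> inv (rep (p \<otimes> k)) = p \<otimes> (k \<otimes> inv (rep k))"
    if p: "p \<in> P" and k: "k \<in> carrier G" for p k
  proof -
    have pc: "p \<in> carrier G" using p subgroup.mem_carrier[OF P] by blast
    have "P #> (p \<otimes> k) = P #> k"
      using coset_mult_assoc[OF subgroup.subset[OF P] pc k] coset_join2[OF pc P p] by simp
    then show ?thesis using pc k rep_carrier[OF k] by (simp add: rep_def m_assoc)
  qed
qed

lemma (in group) amenable_subgroup:
  assumes amenable: "amenable G" and P: "subgroup P G"
  shows "amenable (G\<lparr>carrier := P\<rparr>)"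
proof -
  obtain \<mu> :: "'a set \<Rightarrow> real" where
    nonneg: "\<forall>A. A \<subseteq> carrier G \<longrightarrow> \<mu> A \<ge> 0" and total: "\<mu> (carrier G) = 1"
    and additive: "\<forall>A B. A \<subseteq> carrier G \<longrightarrow> B \<subseteq> carrier G \<longrightarrow> A \<inter> B = {} \<longrightarrow> \<mu> (A \<union> B) = \<mu> A + \<mu> B"
    and invariant: "\<forall>g\<in>carrier G. \<forall>A. A \<subseteq> carrier G \<longrightarrow> \<mu> ((\<lambda>a. g \<otimes> a) ` A) = \<mu> A"
    using amenable unfolding amenable_def by auto
  obtain q where q_in: "\<And>k. k \<in> carrier G \<Longrightarrow> q k \<in> P"
    and q_equivariant: "\<And>p k. p \<in> P \<Longrightarrow> k \<in> carrier G \<Longrightarrow> q (p \<otimes> k) = p \<otimes> q k"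
    using equivariant_retraction_onto_subgroup[OF P] by blast
  define preim where "preim A = {k \<in> carrier G. q k \<in> A}" for A
  have Pc: "P \<subseteq> carrier G" using subgroup.subset[OF P] .
  have preim_shift: "preim ((\<lambda>a. p \<otimes> a) ` A) = (\<lambda>k. p \<otimes> k) ` preim A"
    if p: "p \<in> P" and A: "A \<subseteq> P" for p A
  proof
    show "(\<lambda>k. p \<otimes> k) ` preim A \<subseteq> preim ((\<lambda>a. p \<otimes> a) ` A)"
      using p Pc q_equivariant by (auto simp: preim_def)
  next
    show "preim ((\<lambda>a. p \<otimes> a) ` A) \<subseteq> (\<lambda>k. p \<otimes> k) ` preim A"
    proof
      fix k assume "k \<in> preim ((\<lambda>a. p \<otimes> a) ` A)"
      then obtain a where k: "k \<in> carrier G" and a: "a \<in> A" and qk: "q k = p \<otimes> a"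
        by (auto simp: preim_def)
      have pc: "p \<in> carrier G" and ac: "a \<in> carrier G" using p a A Pc by auto
      have "k = p \<otimes> (inv p \<otimes> k)" using pc k by (simp add: m_assoc[symmetric])
      moreover have "q (inv p \<otimes> k) = a"
        using q_equivariant[OF subgroup.m_inv_closed[OF P p] k] qk pc ac
        by (simp add: m_assoc[symmetric])
      then have "inv p \<otimes> k \<in> preim A" using a pc k by (simp add: preim_def)
      ultimately show "k \<in> (\<lambda>k. p \<otimes> k) ` preim A" by (rule image_eqI)
    qed
  qed
  have preim_carrier: "preim A \<subseteq> carrier G" for A by (auto simp: preim_def)
  have "preim P = carrier G" using q_in by (auto simp: preim_def)
  moreover have "\<mu> (preim (A \<union> B)) = \<mu> (preim A) + \<mu> (preim B)" if "A \<inter> B = {}" for A B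
  proof -
    have "preim (A \<union> B) = preim A \<union> preim B" "preim A \<inter> preim B = {}"
      using that by (auto simp: preim_def)
    then show ?thesis using additive preim_carrier by simp
  qed
  moreover have "\<mu> (preim ((\<lambda>a. p \<otimes> a) ` A)) = \<mu> (preim A)" if "p \<in> P" "A \<subseteq> P" for p A
    using that preim_shift invariant preim_carrier Pc by (simp add: subsetD)
  ultimately show ?thesis
    using nonneg total preim_carrier by (intro amenableI[where \<mu> = "\<lambda>A. \<mu> (preim A)"]) simp_all
qed

lemma (in group) conjugation_hom: "g \<in> carrier G \<Longrightarrow> (\<lambda>h. g \<otimes> h \<otimes> inv g) \<in> hom G G"
  by (auto simp: hom_def m_assoc) (simp add: m_assoc[symmetric])

lemma (in group) amenable_if_conjugate_into_amenable:
  assumes g: "g \<in> carrier G" and H: "subgroup H G" and K: "subgroup K G"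
    and into: "(\<lambda>h. g \<otimes> h \<otimes> inv g) ` H \<subseteq> K" and amenable: "amenable (G\<lparr>carrier := K\<rparr>)"
  shows "amenable (G\<lparr>carrier := H\<rparr>)"
proof -
  let ?c = "\<lambda>h. g \<otimes> h \<otimes> inv g"
  have "group_hom G G ?c"
    using conjugation_hom[OF g] by (simp add: group_hom_def group_hom_axioms_def is_group)
  then have image: "subgroup (?c ` H) G"
    using group_hom.subgroup_img_is_subgroup[OF _ H] by blast
  have "subgroup (?c ` H) (G\<lparr>carrier := K\<rparr>)"
    using subgroup_incl[OF image K into] .
  then have "amenable (G\<lparr>carrier := ?c ` H\<rparr>)"
    using group.amenable_subgroup[OF subgroup.subgroup_is_group[OF K is_group] amenable] by simp
  moreover have "bij_betw ?c H (?c ` H)"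
    using g subgroup.subset[OF H] by (auto simp: bij_betw_def inj_on_def subset_iff)
  moreover have "?c (a \<otimes> b) = ?c a \<otimes> ?c b" if "a \<in> H" "b \<in> H" for a b
    using hom_mult[OF conjugation_hom[OF g]] that subgroup.mem_carrier[OF H] by blast
  ultimately show ?thesis
    using amenable_bij_hom_transfer[of "G\<lparr>carrier := ?c ` H\<rparr>" ?c "G\<lparr>carrier := H\<rparr>"] by simp
qed

lemma (in group) trivial_if_conjugate_into_trivial:
  assumes g: "g \<in> carrier G" and H: "subgroup H G" and into: "(\<lambda>h. g \<otimes> h \<otimes> inv g) ` H \<subseteq> {\<one>}"
  shows "H = {\<one>}"
proof -
  have "h = \<one>" if h: "h \<in> H" for h
  proof -
    have hc: "h \<in> carrier G" using h subgroup.mem_carrier[OF H] by blast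
    have "h = inv g \<otimes> (g \<otimes> h \<otimes> inv g) \<otimes> g"
      using g hc by (simp add: m_assoc) (simp add: m_assoc[symmetric])
    also have "g \<otimes> h \<otimes> inv g = \<one>" using into h by blast
    finally show ?thesis using g by simp
  qed
  then show ?thesis using subgroup.one_closed[OF H] by blast
qed

subsection \<open>Rigid stabilisers of an action by homeomorphisms\<close>

lemma rigid_stab_antimono: "U \<subseteq> W \<Longrightarrow> rigid_stab G phi W \<subseteq> rigid_stab G phi U"
  by (auto simp: rigid_stab_def)

lemma germ_stab_eq_Union_rigid_stab:
  "germ_stab G phi x = (\<Union>W\<in>{W. open W \<and> x \<in> W}. rigid_stab G phi W)"
  by (auto simp: germ_stab_def rigid_stab_def)

locale homeo_group_action =
  fixes G :: "('g, 'b) monoid_scheme" (structure) and phi :: "'g \<Rightarrow> 'x::topological_space \<Rightarrow> 'x"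
  assumes homeo_action: "homeo_action G phi"

sublocale homeo_group_action \<subseteq> group G
  using homeo_action by (simp add: homeo_action_def)

context homeo_group_action
begin

lemma action_mult: "g \<in> carrier G \<Longrightarrow> h \<in> carrier G \<Longrightarrow> phi (g \<otimes> h) x = phi g (phi h x)"
  using homeo_action by (simp add: homeo_action_def)

lemma action_one [simp]: "phi \<one> x = x"
  using homeo_action by (simp add: homeo_action_def)

lemma action_inv_cancel [simp]:
  assumes "g \<in> carrier G"
  shows "phi g (phi (inv g) x) = x" and "phi (inv g) (phi g x) = x"
  using action_mult[of g "inv g" x] action_mult[of "inv g" g x] assms by simp_all

lemma image_action_eq_vimage:
  assumes g: "g \<in> carrier G"
  shows "phi g ` W = phi (inv g) -` W"
proof
  show "phi g ` W \<subseteq> phi (inv g) -` W" using g by auto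
  show "phi (inv g) -` W \<subseteq> phi g ` W"
  proof
    fix y assume "y \<in> phi (inv g) -` W"
    then have "phi g (phi (inv g) y) \<in> phi g ` W" by blast
    then show "y \<in> phi g ` W" using g by simp
  qed
qed

lemma open_image_action: "g \<in> carrier G \<Longrightarrow> open W \<Longrightarrow> open (phi g ` W)"
  using homeo_action image_action_eq_vimage[of g W]
  by (simp add: homeo_action_def open_vimage)

lemma subgroup_rigid_stab: "subgroup (rigid_stab G phi W) G"
proof (rule subgroupI)
  fix a b assume a: "a \<in> rigid_stab G phi W" and b: "b \<in> rigid_stab G phi W"
  have "phi (inv a) x = x" if "x \<in> W" for x
    using a that action_inv_cancel(2)[of a x] by (simp add: rigid_stab_def)
  then show "inv a \<in> rigid_stab G phi W"
    using a by (simp add: rigid_stab_def)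
  show "a \<otimes> b \<in> rigid_stab G phi W"
    using a b by (auto simp: rigid_stab_def action_mult)
next
  show "rigid_stab G phi W \<subseteq> carrier G" by (auto simp: rigid_stab_def)
  show "rigid_stab G phi W \<noteq> {}" by (auto simp: rigid_stab_def intro!: exI[of _ \<one>])
qed

lemma conjugate_rigid_stab:
  assumes g: "g \<in> carrier G" and h: "h \<in> rigid_stab G phi W"
  shows "g \<otimes> h \<otimes> inv g \<in> rigid_stab G phi (phi g ` W)"
  using g h by (auto simp: rigid_stab_def action_mult)

end

locale extreme_boundary = homeo_group_action +
  assumes extreme_boundary: "extreme_boundary_action G phi"
begin

lemma exists_conjugate_into_rigid_stab:
  assumes W: "open W" "W \<noteq> {}" and U: "closure U \<noteq> UNIV"
  shows "\<exists>g\<in>carrier G. (\<lambda>h. g \<otimes> h \<otimes> inv g) ` rigid_stab G phi W \<subseteq> rigid_stab G phi U"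
proof -
  have "closed (- W)" "- W \<noteq> UNIV" "open (- closure U)" "- closure U \<noteq> {}"
    using W U by auto
  then obtain g where g: "g \<in> carrier G" and moves: "phi g ` (- W) \<subseteq> - closure U"
    using extreme_boundary unfolding extreme_boundary_action_def by blast
  have "U \<subseteq> phi g ` W"
  proof
    fix u assume u: "u \<in> U"
    have "phi (inv g) u \<in> W"
    proof (rule ccontr)
      assume "phi (inv g) u \<notin> W"
      then have "phi g (phi (inv g) u) \<in> - closure U" using moves by blast
      then show False using u g closure_subset by auto
    qed
    then show "u \<in> phi g ` W" using g by (simp add: image_action_eq_vimage)
  qed
  then have "(\<lambda>h. g \<otimes> h \<otimes> inv g) ` rigid_stab G phi W \<subseteq> rigid_stab G phi U"
    using conjugate_rigid_stab[OF g] rigid_stab_antimono[of U "phi g ` W" G phi] by blast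
  with g show ?thesis by blast
qed

lemma conjugates_rigid_stab_eq_germ_stabs:
  assumes U: "open U" "U \<noteq> {}" "closure U \<noteq> UNIV"
  shows "{g \<otimes> h \<otimes> inv g | g h. g \<in> carrier G \<and> h \<in> rigid_stab G phi U} = (\<Union>x. germ_stab G phi x)"
proof (intro equalityI subsetI)
  fix c assume "c \<in> {g \<otimes> h \<otimes> inv g | g h. g \<in> carrier G \<and> h \<in> rigid_stab G phi U}"
  then obtain g h where c: "c = g \<otimes> h \<otimes> inv g" and g: "g \<in> carrier G" and h: "h \<in> rigid_stab G phi U"
    by blast
  have "c \<in> rigid_stab G phi (phi g ` U)" using conjugate_rigid_stab[OF g h] c by simp
  moreover obtain x where "x \<in> U" using U by blast
  ultimately have "c \<in> germ_stab G phi (phi g x)"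
    using open_image_action[OF g U(1)] unfolding germ_stab_eq_Union_rigid_stab by blast
  then show "c \<in> (\<Union>x. germ_stab G phi x)" by blast
next
  fix h assume "h \<in> (\<Union>x. germ_stab G phi x)"
  then obtain x where "h \<in> germ_stab G phi x" by blast
  then obtain W where W: "open W" "x \<in> W" and h: "h \<in> rigid_stab G phi W"
    unfolding germ_stab_eq_Union_rigid_stab by blast
  obtain g where g: "g \<in> carrier G" and into: "(\<lambda>h. g \<otimes> h \<otimes> inv g) ` rigid_stab G phi W \<subseteq> rigid_stab G phi U"
    using exists_conjugate_into_rigid_stab[OF W(1) _ U(3)] W(2) by blast
  have hc: "h \<in> carrier G" using h by (simp add: rigid_stab_def)
  have "h = inv g \<otimes> (g \<otimes> h \<otimes> inv g) \<otimes> inv (inv g)"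
    using g hc by (simp add: m_assoc) (simp add: m_assoc[symmetric])
  moreover have "g \<otimes> h \<otimes> inv g \<in> rigid_stab G phi U" using into h by blast
  moreover have "inv g \<in> carrier G" using g by simp
  ultimately show "h \<in> {g \<otimes> h \<otimes> inv g | g h. g \<in> carrier G \<and> h \<in> rigid_stab G phi U}"
    by blast
qed

lemma normal_closure_rigid_stab_eq_int_action:
  assumes "open U" "U \<noteq> {}" "closure U \<noteq> UNIV"
  shows "normal_closure G (rigid_stab G phi U) = int_action G phi"
  using conjugates_rigid_stab_eq_germ_stabs[OF assms]
  by (simp add: normal_closure_def int_action_def)

end

theorem mainTheorem6:
  fixes G :: "('g, 'b) monoid_scheme"
    and phi :: "'g \<Rightarrow> 'x::t2_space \<Rightarrow> 'x"
    and U V :: "'x set"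
  assumes "compact (UNIV :: 'x set)"
    and "\<exists>a b c :: 'x. a \<noteq> b \<and> a \<noteq> c \<and> b \<noteq> c"
    and "homeo_action G phi"
    and "extreme_boundary_action G phi"
    and "open U" "U \<noteq> {}" "closure U \<noteq> UNIV"
    and "open V" "V \<noteq> {}" "closure V \<noteq> UNIV"
  shows "normal_closure G (rigid_stab G phi U) = normal_closure G (rigid_stab G phi V)
       \<and> normal_closure G (rigid_stab G phi U) = int_action G phi
       \<and> (amenable (G\<lparr>carrier := rigid_stab G phi U\<rparr>) \<longleftrightarrow> amenable (G\<lparr>carrier := rigid_stab G phi V\<rparr>))
       \<and> (rigid_stab G phi U = {\<one>\<^bsub>G\<^esub>} \<longleftrightarrow> rigid_stab G phi V = {\<one>\<^bsub>G\<^esub>})"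
proof -
  interpret extreme_boundary G phi
    using assms(3,4) by unfold_locales
  obtain g where g: "g \<in> carrier G"
    and VU: "(\<lambda>h. g \<otimes>\<^bsub>G\<^esub> h \<otimes>\<^bsub>G\<^esub> inv\<^bsub>G\<^esub> g) ` rigid_stab G phi V \<subseteq> rigid_stab G phi U"
    using exists_conjugate_into_rigid_stab[OF assms(8,9,7)] by blast
  obtain g' where g': "g' \<in> carrier G"
    and UV: "(\<lambda>h. g' \<otimes>\<^bsub>G\<^esub> h \<otimes>\<^bsub>G\<^esub> inv\<^bsub>G\<^esub> g') ` rigid_stab G phi U \<subseteq> rigid_stab G phi V"
    using exists_conjugate_into_rigid_stab[OF assms(5,6,10)] by blast
  show ?thesis
    using normal_closure_rigid_stab_eq_int_action[OF assms(5-7)]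
      normal_closure_rigid_stab_eq_int_action[OF assms(8-10)]
      amenable_if_conjugate_into_amenable[OF g subgroup_rigid_stab subgroup_rigid_stab VU]
      amenable_if_conjugate_into_amenable[OF g' subgroup_rigid_stab subgroup_rigid_stab UV]
      trivial_if_conjugate_into_trivial[OF g subgroup_rigid_stab, of V]
      trivial_if_conjugate_into_trivial[OF g' subgroup_rigid_stab, of U]
      VU UV by auto
qed

end
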